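(* Let $T$ be a supercritical Galton–Watson tree with finite alphabet $\mathbb{A}$. Let $(\mathscr{A}_k)_{k\in\mathbb{N}}$ be such that each $\mathscr{A}_k$ is a nonempty collection of nonempty subsets of $\mathbb{A}^k$, and define $g_{\mathscr{A}_k}(s)=\mathbb{P}(T_k^{(s)}\notin\overline{\mathscr{A}_k})$ for $s\in[0,1]$. Assume that $g_{\mathscr{A}_k}(s)\to\mathbb{P}(\text{extinction})$ as $k\to\infty$ for every $s\in(0,1)$. Then there is $K\in\mathbb{N}$ such that for every $k>K$, almost surely conditioned on nonextinction, there exist infinitely many vertices $v\in T_{(k)}$ such that the descendants tree $(T_{(k)})^v$ has an $\mathscr{A}_k$-subtree.
   Context: Trees with alphabet $\mathbb{B}$ are prefix-closed subsets of $\mathbb{B}^*$ containing the empty word; $W_S(a)=\{i\in\mathbb{B}:ai\in S\}$; $S^v=\{j:vj\in S\}$; an $\mathscr{A}$-subtree of $S$ is a tree $S'\subseteq S$ with $W_{S'}(a)\in\mathscr{A}$ for all $a\in S'$. The Galton–Watson tree with offspring distribution $W$ (random subset of $\mathbb{A}$ with $\mathbb{P}(i\in W)>0$ for all $i$) is $T_0=\{\emptyset\}$, $T_n=\{aj:a\in T_{n-1},j\in W_a\}$ with independent copies $W_a$; supercritical means $\mathbb{E}|W|>1$; extinction means some $T_n=\emptyset$. The $k$-compressed tree is $T_{(k)}=\bigcup_{n\ge0}T_{kn}$, viewed as a tree with alphabet $\mathbb{A}^k$ (identifying $\mathbb{A}^{kn}$ with $(\mathbb{A}^k)^n$). $\overline{\mathscr{A}}=\{S:\exists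 X\in\mathscr{A},X\subseteq S\}$. $T_k^{(s)}=T_k\cap Y$ with $Y\subseteq\mathbb{A}^k$ independent, $\mathbb{P}(Y=B)=(1-s)^{|B|}s^{|\mathbb{A}^k\setminus B|}$. *)

theory Defs
  imports "HOL-Probability.Probability"
begin

definition is_tree :: "'b list set \<Rightarrow> bool" where
  "is_tree S \<longleftrightarrow> [] \<in> S \<and> (\<forall>u v. u @ v \<in> S \<longrightarrow> u \<in> S)"

definition children :: "'b list set \<Rightarrow> 'b list \<Rightarrow> 'b set" where
  "children S a = {i. a @ [i] \<in> S}"

definition desc_tree :: "'b list set \<Rightarrow> 'b list \<Rightarrow> 'b list set" where
  "desc_tree S v = {j. v @ j \<in> S}"

definition has_subtree :: "'b set set \<Rightarrow> 'b list set \<Rightarrow> bool" where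
  "has_subtree \<A> S \<longleftrightarrow> (\<exists>S'. is_tree S' \<and> S' \<subseteq> S \<and> (\<forall>a\<in>S'. children S' a \<in> \<A>))"

definition upclose :: "'b set set \<Rightarrow> 'b set set" where
  "upclose \<A> = {S. \<exists>X\<in>\<A>. X \<subseteq> S}"

(* sample space: a family of independent copies W_a, a \<in> 'a list *)
definition gw_space :: "'a set pmf \<Rightarrow> ('a list \<Rightarrow> 'a set) measure" where
  "gw_space W = PiM UNIV (\<lambda>_. measure_pmf W)"

fun gw_level :: "('a list \<Rightarrow> 'a set) \<Rightarrow> nat \<Rightarrow> 'a list set" where
  "gw_level \<omega> 0 = {[]}"
| "gw_level \<omega> (Suc n) = {a @ [j] | a j. a \<in> gw_level \<omega> n \<and> j \<in> \<omega> a}"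

definition extinct :: "('a list \<Rightarrow> 'a set) \<Rightarrow> bool" where
  "extinct \<omega> \<longleftrightarrow> (\<exists>n. gw_level \<omega> n = {})"

(* T_(k) = \<Union>_n T_{kn}, as a tree over alphabet A^k (words of length k),
   identifying A^{kn} with (A^k)^n *)
definition compressed_tree :: "nat \<Rightarrow> ('a list \<Rightarrow> 'a set) \<Rightarrow> 'a list list set" where
  "compressed_tree k \<omega> =
     {ws. (\<forall>w\<in>set ws. length w = k) \<and> concat ws \<in> gw_level \<omega> (k * length ws)}"

(* law of Y \<subseteq> A^k: each word kept independently with probability 1 - s,
   so P(Y = B) = (1-s)^|B| s^|A^k - B| *)
definition thin_pmf :: "nat \<Rightarrow> real \<Rightarrow> 'a list set pmf" where
  "thin_pmf k s = map_pmf (\<lambda>f. {w. length w = k \<and> f w})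
      (Pi_pmf {w. length w = k} False (\<lambda>_. bernoulli_pmf (1 - s)))"

(* g_{\<A>_k}(s) = P(T_k^{(s)} \<notin> upclose \<A>_k), T_k^{(s)} = T_k \<inter> Y, Y independent *)
definition g_fun :: "'a set pmf \<Rightarrow> nat \<Rightarrow> 'a list set set \<Rightarrow> real \<Rightarrow> real" where
  "g_fun W k \<A> s = measure (gw_space W \<Otimes>\<^sub>M measure_pmf (thin_pmf k s))
      {(\<omega>, Y). gw_level \<omega> k \<inter> Y \<notin> upclose \<A>}"

end

(*
  Fix k and let D_n be the event that the k-compressed tree has an A_k-subtree of height n at
  its root. The first generation T_k of the compressed tree is independent of the environments
  of the subtrees rooted at its vertices, and these are distributed like the whole tree. Hence
  the vertices of T_k below which D_n occurs form an independent thinning of T_k that deletes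
  each vertex with probability P(not D_n), i.e. P(not D_(n+1)) = g(P(not D_n)) for g = g_(A_k).
  Since g is increasing and g(s) < s for a fixed s between the extinction probability q and 1
  once k is large, all D_n, and so their intersection H, have probability at least 1 - s > 0;
  on H the compressed tree has an infinite A_k-subtree at its root.

  Let E be the event that H occurs below some vertex of T_(k). If E fails, it fails below every
  vertex of generation kn; as the members of A_(kn) are nonempty, the same thinning argument
  gives P(not E) <= g_(A_(kn))(P(not E)) for every n, and in the limit P(not E) <= q. Since
  extinction excludes E, E holds almost surely on survival, and below a vertex where H occurs
  every vertex of the infinite A_k-subtree is a vertex with an A_k-subtree.
*)

theory Submission
  imports Defs
begin

section \<open>Lineages and generations\<close>

definition lineage :: "('b list \<Rightarrow> 'b set) \<Rightarrow> 'b list \<Rightarrow> bool" where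
  "lineage f w \<longleftrightarrow> (\<forall>i<length w. w ! i \<in> f (take i w))"

lemma lineage_Nil [simp]: "lineage f []"
  by (simp add: lineage_def)

lemma lineage_snoc [simp]: "lineage f (w @ [x]) \<longleftrightarrow> lineage f w \<and> x \<in> f w"
  by (auto simp: lineage_def nth_append less_Suc_eq)

lemma lineage_append: "lineage f (u @ w) \<longleftrightarrow> lineage f u \<and> lineage (\<lambda>x. f (u @ x)) w"
  by (induction w rule: rev_induct) (simp_all flip: append_assoc)

text \<open>The environment generating the descendants tree of the vertex \<open>v\<close>.\<close>

definition gw_shift :: "'a list \<Rightarrow> ('a list \<Rightarrow> 'a set) \<Rightarrow> 'a list \<Rightarrow> 'a set" where
  "gw_shift v \<omega> = (\<lambda>u. \<omega> (v @ u))"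

lemma gw_shift_Nil [simp]: "gw_shift [] \<omega> = \<omega>"
  by (simp add: gw_shift_def)

lemma gw_shift_append: "gw_shift (u @ v) \<omega> = gw_shift v (gw_shift u \<omega>)"
  by (simp add: gw_shift_def)

lemma gw_level_eq: "gw_level \<omega> n = {w. length w = n \<and> lineage \<omega> w}"
proof (induction n)
  case (Suc n)
  show ?case
    by (auto simp: Suc length_Suc_conv_rev)
qed auto

lemma length_gw_level: "w \<in> gw_level \<omega> n \<Longrightarrow> length w = n"
  by (simp add: gw_level_eq)

lemma gw_level_cong: "(\<And>u. length u < n \<Longrightarrow> \<omega> u = \<omega>' u) \<Longrightarrow> gw_level \<omega> n = gw_level \<omega>' n"
  by (auto simp: gw_level_eq lineage_def)

lemma append_in_gw_level:
  "u \<in> gw_level \<omega> m \<Longrightarrow> w \<in> gw_level (gw_shift u \<omega>) n \<Longrightarrow> u @ w \<in> gw_level \<omega> (m + n)"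
  by (simp add: gw_level_eq lineage_append gw_shift_def)

lemma gw_level_empty_mono: "gw_level \<omega> n = {} \<Longrightarrow> n \<le> m \<Longrightarrow> gw_level \<omega> m = {}"
  by (induction m) (auto simp: le_Suc_eq)

lemma concat_chunks_exist:
  "length u = k * n \<Longrightarrow> \<exists>ws. length ws = n \<and> (\<forall>w\<in>set ws. length w = k) \<and> concat ws = u"
proof (induction n arbitrary: u)
  case (Suc n)
  then obtain ws where "length ws = n" "\<forall>w\<in>set ws. length w = k" "concat ws = drop k u"
    by (metis add_diff_cancel_left' length_drop mult_Suc_right)
  with Suc.prems show ?case
    by (intro exI[of _ "take k u # ws"]) auto
qed simp

lemma compressed_tree_append:
  assumes "ws \<in> compressed_tree k \<omega>" "vs \<in> compressed_tree k (gw_shift (concat ws) \<omega>)"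
  shows "ws @ vs \<in> compressed_tree k \<omega>"
  using append_in_gw_level[of "concat ws" \<omega> "k * length ws" "concat vs" "k * length vs"] assms
  by (auto simp: compressed_tree_def algebra_simps)

lemma compressed_tree_of_gw_level:
  assumes "u \<in> gw_level \<omega> (k * n)"
  obtains ws where "ws \<in> compressed_tree k \<omega>" "concat ws = u"
proof -
  obtain ws where "length ws = n" "\<forall>w\<in>set ws. length w = k" "concat ws = u"
    using concat_chunks_exist[OF length_gw_level[OF assms]] by blast
  with assms show thesis
    by (intro that[of ws]) (auto simp: compressed_tree_def)
qed

lemma infinite_tree_without_leaves:
  assumes "is_tree S" "\<And>a. a \<in> S \<Longrightarrow> children S a \<noteq> {}"
  shows "infinite S"
proof
  assume fin: "finite S"
  have "[] \<in> S" using assms(1) by (simp add: is_tree_def)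
  then obtain a where a: "a \<in> S" "length a = Max (length ` S)"
    using fin by (metis Max_in empty_iff finite_imageI image_iff image_is_empty)
  then obtain i where "a @ [i] \<in> S" using assms(2) by (auto simp: children_def)
  then have "length (a @ [i]) \<le> Max (length ` S)" using fin by (metis Max_ge finite_imageI imageI)
  then show False using a by simp
qed

section \<open>Shifts and independence under the Galton--Watson measure\<close>

lemma space_gw_space [simp]: "space (gw_space W) = UNIV"
  by (simp add: gw_space_def space_PiM)

lemma prob_space_gw_space: "prob_space (gw_space W)"
  unfolding gw_space_def by (intro prob_space_PiM prob_space_measure_pmf)

lemma measurable_gw_shift: "gw_shift v \<in> gw_space W \<rightarrow>\<^sub>M gw_space W"
  unfolding gw_space_def gw_shift_def
  by (rule measurable_PiM_single') (auto intro: measurable_component_singleton)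

lemma distr_gw_shift: "distr (gw_space W) (gw_space W) (gw_shift v) = gw_space W"
proof -
  have "distr (gw_space W) (gw_space W) (\<lambda>\<omega>. \<lambda>u\<in>UNIV. \<omega> (v @ u)) = gw_space W"
    unfolding gw_space_def
    using distr_PiM_reindex[of UNIV "\<lambda>_. measure_pmf W" "\<lambda>u. v @ u" UNIV]
    by (simp add: prob_space_measure_pmf inj_on_def)
  moreover have "(\<lambda>\<omega>. \<lambda>u\<in>UNIV. \<omega> (v @ u)) = gw_shift v"
    by (simp add: gw_shift_def fun_eq_iff)
  ultimately show ?thesis by simp
qed

lemma measure_gw_shift_vimage:
  assumes "F \<in> sets (gw_space W)"
  shows "measure (gw_space W) (gw_shift v -` F) = measure (gw_space W) F"
  using measure_distr[OF measurable_gw_shift, of F] assms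
  by (simp add: distr_gw_shift)

lemma sets_PiM_pmf_finite:
  fixes W :: "('a::finite) set pmf"
  assumes "finite N" "X \<subseteq> space (PiM N (\<lambda>_. measure_pmf W))"
  shows "X \<in> sets (PiM N (\<lambda>_. measure_pmf W))"
proof (rule sets.countable)
  have "finite (space (PiM N (\<lambda>_. measure_pmf W)))"
    using assms(1) by (simp add: space_PiM finite_PiE)
  then show "countable X"
    using assms(2) by (meson countable_finite finite_subset)
next
  fix a assume "a \<in> X"
  then have a: "a \<in> PiE N (\<lambda>_. UNIV)"
    using assms(2) by (auto simp: space_PiM)
  have "{a} = PiE N (\<lambda>i. {a i})"
    using a by (auto simp: PiE_iff extensional_def) (metis ext)
  also have "\<dots> \<in> sets (PiM N (\<lambda>_. measure_pmf W))"
    using assms(1) by (intro sets_PiM_I_finite) auto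
  finally show "{a} \<in> sets (PiM N (\<lambda>_. measure_pmf W))" .
qed

lemma sets_gw_space_Compl: "F \<in> sets (gw_space W) \<Longrightarrow> UNIV - F \<in> sets (gw_space W)"
  by (metis sets.compl_sets space_gw_space)

lemma finite_words_shorter: "finite {u :: ('a::finite) list. length u < m}"
  by (rule finite_subset[OF _ finite_lists_length_le[of "UNIV :: 'a set" m]]) auto

lemma finite_words_length: "finite {u :: ('a::finite) list. length u = m}"
  using finite_lists_length_eq[of "UNIV :: 'a set" m] by simp

lemma sets_gw_level: "{\<omega>. P (gw_level \<omega> m)} \<in> sets (gw_space (W :: ('a::finite) set pmf))"
proof -
  let ?N = "{u :: 'a list. length u < m}"
  have "{\<eta> \<in> space (PiM ?N (\<lambda>_. measure_pmf W)). P (gw_level \<eta> m)}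
      \<in> sets (PiM ?N (\<lambda>_. measure_pmf W))"
    by (rule sets_PiM_pmf_finite[OF finite_words_shorter]) auto
  moreover have "(\<lambda>\<omega>. restrict \<omega> ?N) \<in> gw_space W \<rightarrow>\<^sub>M PiM ?N (\<lambda>_. measure_pmf W)"
    unfolding gw_space_def by (rule measurable_restrict_subset) auto
  ultimately have "(\<lambda>\<omega>. restrict \<omega> ?N) -` {\<eta> \<in> space (PiM ?N (\<lambda>_. measure_pmf W)). P (gw_level \<eta> m)}
      \<inter> space (gw_space W) \<in> sets (gw_space W)"
    by (rule measurable_sets[rotated])
  moreover have "gw_level (restrict \<omega> ?N) m = gw_level \<omega> m" for \<omega>
    by (rule gw_level_cong) auto
  ultimately show ?thesis
    by (simp add: space_PiM vimage_def)
qed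

lemma indep_vars_gw_coords:
  "prob_space.indep_vars (gw_space W) (\<lambda>_. measure_pmf W) (\<lambda>u \<omega>. \<omega> u) UNIV"
proof -
  interpret P: prob_space "gw_space W" by (rule prob_space_gw_space)
  have coord: "(\<lambda>\<omega>. \<omega> u) \<in> gw_space W \<rightarrow>\<^sub>M measure_pmf W" for u
    unfolding gw_space_def by (rule measurable_component_singleton) simp
  have distr_coord: "distr (gw_space W) (measure_pmf W) (\<lambda>\<omega>. \<omega> u) = measure_pmf W" for u
    unfolding gw_space_def by (rule distr_PiM_component) (auto simp: prob_space_measure_pmf)
  show ?thesis
  proof (subst P.indep_vars_iff_distr_eq_PiM)
    have id: "(\<lambda>\<omega>. \<lambda>u\<in>UNIV. \<omega> u) = (\<lambda>\<omega>. \<omega>)"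
      by (simp add: fun_eq_iff)
    show "distr (gw_space W) (Pi\<^sub>M UNIV (\<lambda>_. measure_pmf W)) (\<lambda>\<omega>. \<lambda>u\<in>UNIV. \<omega> u) =
      Pi\<^sub>M UNIV (\<lambda>u. distr (gw_space W) (measure_pmf W) (\<lambda>\<omega>. \<omega> u))"
      unfolding id distr_coord by (simp add: gw_space_def distr_id2 del: distr_id)
  qed (use coord in simp_all)
qed

text \<open>The environment below generation \<open>m\<close> and the shifted environments at the words of
  length \<open>m\<close> read off pairwise disjoint sets of coordinates.\<close>

lemma indep_vars_below_and_shifts:
  fixes W :: "'a set pmf"
  shows "prob_space.indep_vars (gw_space W)
     (\<lambda>j. case j of None \<Rightarrow> PiM {u. length u < m} (\<lambda>_. measure_pmf W) | Some v \<Rightarrow> gw_space W)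
     (\<lambda>j \<omega>. case j of None \<Rightarrow> restrict \<omega> {u. length u < m} | Some v \<Rightarrow> gw_shift v \<omega>)
     (insert None (Some ` {v. length v = m}))"
proof -
  interpret P: prob_space "gw_space W" by (rule prob_space_gw_space)
  let ?J = "insert None (Some ` {v. length v = m})"
  define K :: "'a list option \<Rightarrow> 'a list set"
    where "K j = (case j of None \<Rightarrow> {u. length u < m} | Some v \<Rightarrow> range ((@) v))" for j
  have "disjoint_family_on K ?J"
    unfolding disjoint_family_on_def K_def by (auto simp: append_eq_append_conv)
  then have "P.indep_vars (\<lambda>j. PiM (K j) (\<lambda>_. measure_pmf W)) (\<lambda>j \<omega>. restrict \<omega> (K j)) ?J"
    using P.indep_vars_restrict[OF indep_vars_gw_coords] by simp
  then have "P.indep_vars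
      (\<lambda>j. case j of None \<Rightarrow> PiM {u. length u < m} (\<lambda>_. measure_pmf W) | Some v \<Rightarrow> gw_space W)
      (\<lambda>j \<omega>. (case j of None \<Rightarrow> (\<lambda>\<eta>. \<eta>) | Some v \<Rightarrow> gw_shift v) (restrict \<omega> (K j))) ?J"
  proof (rule P.indep_vars_compose2)
    have "gw_shift v \<in> PiM (range ((@) v)) (\<lambda>_. measure_pmf W) \<rightarrow>\<^sub>M gw_space W" for v
      unfolding gw_space_def gw_shift_def
      by (rule measurable_PiM_single') (auto intro: measurable_component_singleton)
    then show "(case j of None \<Rightarrow> (\<lambda>\<eta>. \<eta>) | Some v \<Rightarrow> gw_shift v)
        \<in> PiM (K j) (\<lambda>_. measure_pmf W) \<rightarrow>\<^sub>M
          (case j of None \<Rightarrow> PiM {u. length u < m} (\<lambda>_. measure_pmf W) | Some v \<Rightarrow> gw_space W)" for j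
      by (cases j) (simp_all add: K_def)
  qed
  then show ?thesis
    by (rule P.indep_vars_cong[THEN iffD1, rotated -1])
      (auto simp: K_def gw_shift_def fun_eq_iff split: option.split)
qed

lemma measure_gw_level_Int_shifts:
  fixes W :: "('a::finite) set pmf"
  assumes G: "\<And>v. G v \<in> sets (gw_space W)"
  shows "measure (gw_space W) ({\<omega>. gw_level \<omega> m = T} \<inter> (\<Inter>v\<in>{v. length v = m}. gw_shift v -` G v))
    = measure (gw_space W) {\<omega>. gw_level \<omega> m = T} *
      (\<Prod>v\<in>{v. length v = m}. measure (gw_space W) (G v))"
proof -
  interpret P: prob_space "gw_space W" by (rule prob_space_gw_space)
  let ?N = "{u::'a list. length u < m}"
  define A where "A j = (case j of
      None \<Rightarrow> {\<eta> \<in> space (PiM ?N (\<lambda>_. measure_pmf W)). gw_level \<eta> m = T} | Some v \<Rightarrow> G v)" for j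
  define Z where "Z j = (\<lambda>\<omega>. case j of None \<Rightarrow> restrict \<omega> ?N | Some v \<Rightarrow> gw_shift v \<omega>) -` A j
      \<inter> space (gw_space W)" for j
  have "P.prob (\<Inter>j\<in>insert None (Some ` {v. length v = m}). Z j)
      = (\<Prod>j\<in>insert None (Some ` {v. length v = m}). P.prob (Z j))"
    unfolding Z_def using finite_words_length
    by (intro P.indep_varsD[OF indep_vars_below_and_shifts])
      (auto simp: A_def G intro: sets_PiM_pmf_finite[OF finite_words_shorter])
  moreover have "Z None = {\<omega>. gw_level \<omega> m = T}"
    using gw_level_cong[of m "restrict _ ?N"] by (auto simp: Z_def A_def space_PiM)
  moreover have "Z (Some v) = gw_shift v -` G v" for v
    by (simp add: Z_def A_def)
  ultimately show ?thesis
    by (simp add: prod.reindex measure_gw_shift_vimage G finite_words_length)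
qed

section \<open>Thinning\<close>

definition thin_weight :: "'b set \<Rightarrow> real \<Rightarrow> 'b set \<Rightarrow> real" where
  "thin_weight L s Y = (\<Prod>v\<in>L. if v \<in> Y then 1 - s else s)"

text \<open>\<open>thin_prob L s \<Phi>\<close> is the probability that the random subset of \<open>L\<close> keeping each element
  independently with probability \<open>1 - s\<close> satisfies \<open>\<Phi>\<close>.\<close>

definition thin_prob :: "'b set \<Rightarrow> real \<Rightarrow> ('b set \<Rightarrow> bool) \<Rightarrow> real" where
  "thin_prob L s \<Phi> = (\<Sum>Y\<in>Pow L. if \<Phi> Y then thin_weight L s Y else 0)"

lemma thin_weight_nonneg: "0 \<le> s \<Longrightarrow> s \<le> 1 \<Longrightarrow> 0 \<le> thin_weight L s Y"
  unfolding thin_weight_def by (rule prod_nonneg) auto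

lemma thin_prob_empty: "thin_prob {} s \<Phi> = (if \<Phi> {} then 1 else 0)"
  by (simp add: thin_prob_def thin_weight_def)

lemma thin_prob_insert:
  assumes "finite L" "a \<notin> L"
  shows "thin_prob (insert a L) s \<Phi>
    = s * thin_prob L s \<Phi> + (1 - s) * thin_prob L s (\<lambda>Y. \<Phi> (insert a Y))"
proof -
  have inj: "inj_on (insert a) (Pow L)"
    using assms(2) unfolding inj_on_def by (metis Pow_iff insert_absorb insert_ident subsetD)
  have "thin_weight (insert a L) s Y = s * thin_weight L s Y" if "Y \<subseteq> L" for Y
    using that assms unfolding thin_weight_def by (subst prod.insert) auto
  moreover have "thin_weight (insert a L) s (insert a Y) = (1 - s) * thin_weight L s Y"
    if "Y \<subseteq> L" for Y
  proof -
    have "thin_weight L s (insert a Y) = thin_weight L s Y"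
      unfolding thin_weight_def using assms(2) by (intro prod.cong) auto
    then show ?thesis
      using assms unfolding thin_weight_def by (subst prod.insert) auto
  qed
  moreover have "Pow L \<inter> insert a ` Pow L = {}"
    using assms(2) by auto
  ultimately show ?thesis
    unfolding thin_prob_def Pow_insert using assms(1)
    by (simp add: sum.union_disjoint sum.reindex[OF inj] sum_distrib_left)
      (intro arg_cong2[where f = "(+)"] sum.cong refl; auto)
qed

lemma thin_prob_mono:
  assumes "finite L" "\<And>Y Y'. Y' \<subseteq> Y \<Longrightarrow> \<Phi> Y \<Longrightarrow> \<Phi> Y'" and st: "0 \<le> s" "s \<le> t" "t \<le> 1"
  shows "thin_prob L s \<Phi> \<le> thin_prob L t \<Phi>"
  using assms(1,2)
proof (induction L arbitrary: \<Phi> rule: finite_induct)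
  case (insert a L)
  let ?\<Phi>' = "\<lambda>Y. \<Phi> (insert a Y)"
  have IH: "thin_prob L s \<Phi> \<le> thin_prob L t \<Phi>"
    using insert.prems by (rule insert.IH)
  have IH': "thin_prob L s ?\<Phi>' \<le> thin_prob L t ?\<Phi>'"
  proof (rule insert.IH)
    fix Y Y' :: "'a set" assume "Y' \<subseteq> Y" "\<Phi> (insert a Y)"
    then show "\<Phi> (insert a Y')"
      using insert.prems[of "insert a Y'" "insert a Y"] by blast
  qed
  have "thin_prob L t ?\<Phi>' \<le> thin_prob L t \<Phi>"
    unfolding thin_prob_def
  proof (rule sum_mono)
    fix Y
    have "\<Phi> (insert a Y) \<Longrightarrow> \<Phi> Y"
      using insert.prems[of Y "insert a Y"] by blast
    then show "(if ?\<Phi>' Y then thin_weight L t Y else 0) \<le> (if \<Phi> Y then thin_weight L t Y else 0)"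
      using thin_weight_nonneg[of t L Y] st by auto
  qed
  then have "0 \<le> (t - s) * (thin_prob L t \<Phi> - thin_prob L t ?\<Phi>')"
    using st by (intro mult_nonneg_nonneg) auto
  then have "s * thin_prob L t \<Phi> + (1 - s) * thin_prob L t ?\<Phi>'
      \<le> t * thin_prob L t \<Phi> + (1 - t) * thin_prob L t ?\<Phi>'"
    by (simp add: algebra_simps)
  moreover have "s * thin_prob L s \<Phi> + (1 - s) * thin_prob L s ?\<Phi>'
      \<le> s * thin_prob L t \<Phi> + (1 - s) * thin_prob L t ?\<Phi>'"
    using IH IH' st by (intro add_mono mult_left_mono) auto
  ultimately show ?case
    using insert.hyps by (simp add: thin_prob_insert)
qed (simp add: thin_prob_empty)

lemma pmf_thin_pmf:
  assumes s: "0 \<le> s" "s \<le> 1" and Y: "Y \<subseteq> {w::'a::finite list. length w = k}"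
  shows "pmf (thin_pmf k s) Y = thin_weight {w. length w = k} s Y"
proof -
  let ?L = "{w::'a list. length w = k}"
  let ?P = "Pi_pmf ?L False (\<lambda>_. bernoulli_pmf (1 - s))"
  let ?g = "\<lambda>f. {w. length w = k \<and> f w}"
  let ?c = "\<lambda>w. w \<in> Y"
  have sub: "set_pmf ?P \<subseteq> {f. \<forall>x. x \<notin> ?L \<longrightarrow> f x = False}"
    by (rule set_Pi_pmf_subset) (rule finite_words_length)
  have "?g -` {Y} \<inter> set_pmf ?P = {?c} \<inter> set_pmf ?P"
  proof (rule set_eqI, rule iffI)
    fix f assume f: "f \<in> ?g -` {Y} \<inter> set_pmf ?P"
    then have "\<forall>x. x \<notin> ?L \<longrightarrow> f x = False" using sub by auto
    moreover have "{w. length w = k \<and> f w} = Y" using f by auto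
    ultimately have "f = ?c" using Y by (auto simp: fun_eq_iff)
    then show "f \<in> {?c} \<inter> set_pmf ?P" using f by auto
  next
    fix f assume "f \<in> {?c} \<inter> set_pmf ?P"
    then show "f \<in> ?g -` {Y} \<inter> set_pmf ?P" using Y by auto
  qed
  have "pmf (thin_pmf k s) Y = measure ?P (?g -` {Y})"
    unfolding thin_pmf_def by (rule pmf_map)
  also have "\<dots> = measure ?P (?g -` {Y} \<inter> set_pmf ?P)"
    by (simp add: measure_Int_set_pmf)
  also have "\<dots> = measure ?P ({?c} \<inter> set_pmf ?P)"
    by (simp only: \<open>?g -` {Y} \<inter> set_pmf ?P = {?c} \<inter> set_pmf ?P\<close>)
  also have "\<dots> = pmf ?P ?c"
    by (simp add: measure_Int_set_pmf measure_pmf_single)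
  also have "\<dots> = (\<Prod>x\<in>?L. pmf (bernoulli_pmf (1 - s)) (?c x))"
    by (rule pmf_Pi') (use Y finite_words_length in auto)
  also have "\<dots> = thin_weight ?L s Y"
    unfolding thin_weight_def by (rule prod.cong) (use s in auto)
  finally show ?thesis .
qed

lemma set_thin_pmf: "set_pmf (thin_pmf k s) \<subseteq> Pow {w. length w = k}"
  unfolding thin_pmf_def by auto

lemma measure_thin_pmf:
  assumes s: "0 \<le> s" "s \<le> 1"
  shows "measure (thin_pmf k s) S = thin_prob {w::'a::finite list. length w = k} s (\<lambda>Y. Y \<in> S)"
proof -
  let ?L = "{w::'a list. length w = k}"
  have "S \<inter> set_pmf (thin_pmf k s) = (S \<inter> Pow ?L) \<inter> set_pmf (thin_pmf k s)"
    using set_thin_pmf by blast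
  then have "measure (thin_pmf k s) S = measure (thin_pmf k s) (S \<inter> Pow ?L)"
    by (metis measure_Int_set_pmf)
  also have "\<dots> = (\<Sum>Y\<in>S \<inter> Pow ?L. pmf (thin_pmf k s) Y)"
    by (rule measure_measure_pmf_finite) (simp add: finite_words_length)
  also have "\<dots> = (\<Sum>Y\<in>S \<inter> Pow ?L. thin_weight ?L s Y)"
    by (rule sum.cong) (auto simp: pmf_thin_pmf[OF s])
  also have "\<dots> = thin_prob ?L s (\<lambda>Y. Y \<in> S)"
    unfolding thin_prob_def Int_commute[of S] by (simp add: sum.inter_restrict finite_words_length)
  finally show ?thesis .
qed

lemma measure_thin_pmf_mono:
  assumes "\<And>Y Y'. Y' \<subseteq> Y \<Longrightarrow> Y \<in> S \<Longrightarrow> Y' \<in> S" and st: "0 \<le> s" "s \<le> t" "t \<le> 1"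
  shows "measure (thin_pmf k s) S \<le> measure (thin_pmf k t) (S :: ('a::finite) list set set)"
proof -
  have "thin_prob {w. length w = k} s (\<lambda>Y. Y \<in> S) \<le> thin_prob {w. length w = k} t (\<lambda>Y. Y \<in> S)"
    using assms by (intro thin_prob_mono finite_words_length) blast+
  then show ?thesis
    using st by (simp add: measure_thin_pmf)
qed

lemma measure_pair_measure_Times:
  assumes "prob_space M" "prob_space N" "A \<in> sets M" "B \<in> sets N"
  shows "measure (M \<Otimes>\<^sub>M N) (A \<times> B) = measure M A * measure N B"
proof -
  interpret N: prob_space N by fact
  show ?thesis
    using N.emeasure_pair_measure_Times[of A M B] assms(3,4)
    by (simp add: measure_def enn2real_mult)
qed

lemma measure_gw_level_thinning:
  fixes W :: "('a::finite) set pmf"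
  assumes s: "0 \<le> s" "s \<le> 1"
  shows "measure (gw_space W \<Otimes>\<^sub>M measure_pmf (thin_pmf k s)) {(\<omega>, Y). \<Psi> (gw_level \<omega> k) Y}
    = (\<Sum>T\<in>Pow {v. length v = k}.
        measure (gw_space W) {\<omega>. gw_level \<omega> k = T} * measure (thin_pmf k s) {Y. \<Psi> T Y})"
proof -
  let ?M = "gw_space W \<Otimes>\<^sub>M measure_pmf (thin_pmf k s)"
  let ?L = "{v::'a list. length v = k}"
  interpret Q: prob_space ?M
    by (intro prob_space_pair prob_space_gw_space prob_space_measure_pmf)
  define B where "B T = {\<omega>. gw_level \<omega> k = T} \<times> {Y. \<Psi> T Y}" for T
  have B: "B T \<in> sets ?M" for T
    unfolding B_def by (intro pair_measureI sets_gw_level) auto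
  have "gw_level \<omega> k \<in> Pow ?L" for \<omega>
    using length_gw_level by blast
  then have "{(\<omega>, Y). \<Psi> (gw_level \<omega> k) Y} = (\<Union>T\<in>Pow ?L. B T)"
    unfolding B_def by auto
  then have "Q.prob {(\<omega>, Y). \<Psi> (gw_level \<omega> k) Y} = (\<Sum>T\<in>Pow ?L. Q.prob (B T))"
    using finite_words_length B
    by (simp only:) (intro Q.finite_measure_finite_Union; auto simp: disjoint_family_on_def B_def)
  also have "\<dots> = (\<Sum>T\<in>Pow ?L.
      measure (gw_space W) {\<omega>. gw_level \<omega> k = T} * measure (thin_pmf k s) {Y. \<Psi> T Y})"
    unfolding B_def
    by (intro sum.cong refl measure_pair_measure_Times prob_space_gw_space prob_space_measure_pmf
        sets_gw_level) auto
  finally show ?thesis .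
qed

lemma upclose_mono: "X \<in> upclose U \<Longrightarrow> X \<subseteq> Y \<Longrightarrow> Y \<in> upclose U"
  unfolding upclose_def by auto

lemma g_fun_mono:
  fixes W :: "('a::finite) set pmf"
  assumes st: "0 \<le> s" "s \<le> t" "t \<le> 1"
  shows "g_fun W k U s \<le> g_fun W k U t"
proof -
  have "g_fun W k U s = (\<Sum>T\<in>Pow {v. length v = k}.
      measure (gw_space W) {\<omega>. gw_level \<omega> k = T} * measure (thin_pmf k s) {Y. T \<inter> Y \<notin> upclose U})"
    unfolding g_fun_def using st by (intro measure_gw_level_thinning) auto
  also have "\<dots> \<le> (\<Sum>T\<in>Pow {v. length v = k}.
      measure (gw_space W) {\<omega>. gw_level \<omega> k = T} * measure (thin_pmf k t) {Y. T \<inter> Y \<notin> upclose U})"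
  proof (intro sum_mono mult_left_mono measure_thin_pmf_mono[OF _ st] measure_nonneg)
    fix T Y Y' assume "Y' \<subseteq> Y" "Y \<in> {Y. T \<inter> Y \<notin> upclose U}"
    then show "Y' \<in> {Y. T \<inter> Y \<notin> upclose U}"
      using upclose_mono[of "T \<inter> Y'" U "T \<inter> Y"] by blast
  qed
  also have "\<dots> = g_fun W k U t"
    unfolding g_fun_def using st by (intro measure_gw_level_thinning[symmetric]) auto
  finally show ?thesis .
qed

section \<open>Marked generations\<close>

definition marked_words :: "nat \<Rightarrow> ('a list \<Rightarrow> 'a set) set \<Rightarrow> ('a list \<Rightarrow> 'a set) \<Rightarrow> 'a list set" where
  "marked_words m F \<omega> = {v. length v = m \<and> gw_shift v \<omega> \<in> F}"

lemma marked_words_mono: "F \<subseteq> G \<Longrightarrow> marked_words m F \<omega> \<subseteq> marked_words m G \<omega>"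
  by (auto simp: marked_words_def)

lemma gw_level_marked_words_eq_Int:
  assumes "Y \<subseteq> {v. length v = m}"
  shows "{\<omega>. gw_level \<omega> m = T \<and> marked_words m F \<omega> = Y}
    = {\<omega>. gw_level \<omega> m = T} \<inter> (\<Inter>v\<in>{v. length v = m}. gw_shift v -` (if v \<in> Y then F else UNIV - F))"
proof -
  have "marked_words m F \<omega> = Y \<longleftrightarrow>
      \<omega> \<in> (\<Inter>v\<in>{v. length v = m}. gw_shift v -` (if v \<in> Y then F else UNIV - F))" for \<omega>
    using assms by (auto simp: marked_words_def)
  then show ?thesis
    by blast
qed

lemma sets_gw_level_marked_words_eq:
  fixes W :: "('a::finite) set pmf"
  assumes F: "F \<in> sets (gw_space W)" and Y: "Y \<subseteq> {v. length v = m}"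
  shows "{\<omega>. gw_level \<omega> m = T \<and> marked_words m F \<omega> = Y} \<in> sets (gw_space W)"
  unfolding gw_level_marked_words_eq_Int[OF Y]
  using F finite_words_length measurable_sets[OF measurable_gw_shift]
  by (intro sets.Int sets_gw_level sets.finite_INT)
    (auto simp: Ex_list_of_length sets_gw_space_Compl)

lemma measure_gw_level_marked_words_eq:
  fixes W :: "('a::finite) set pmf"
  assumes F: "F \<in> sets (gw_space W)" and Y: "Y \<subseteq> {v. length v = m}"
  shows "measure (gw_space W) {\<omega>. gw_level \<omega> m = T \<and> marked_words m F \<omega> = Y}
    = measure (gw_space W) {\<omega>. gw_level \<omega> m = T} *
      thin_weight {v. length v = m} (measure (gw_space W) (UNIV - F)) Y"
proof -
  interpret P: prob_space "gw_space W" by (rule prob_space_gw_space)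
  have "measure (gw_space W) {\<omega>. gw_level \<omega> m = T \<and> marked_words m F \<omega> = Y}
      = measure (gw_space W) {\<omega>. gw_level \<omega> m = T} *
        (\<Prod>v\<in>{v. length v = m}. measure (gw_space W) (if v \<in> Y then F else UNIV - F))"
    unfolding gw_level_marked_words_eq_Int[OF Y]
    using F by (intro measure_gw_level_Int_shifts) (auto simp: sets_gw_space_Compl)
  also have "(\<Prod>v\<in>{v. length v = m}. measure (gw_space W) (if v \<in> Y then F else UNIV - F))
      = thin_weight {v. length v = m} (measure (gw_space W) (UNIV - F)) Y"
    unfolding thin_weight_def using P.prob_compl[OF F] by (intro prod.cong) auto
  finally show ?thesis .
qed

lemma
  fixes W :: "('a::finite) set pmf" and m :: nat
  assumes F: "F \<in> sets (gw_space W)"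
  defines "L \<equiv> {v::'a list. length v = m}"
  shows sets_gw_level_marked_words:
      "{\<omega>. \<Phi> (gw_level \<omega> m) (marked_words m F \<omega>)} \<in> sets (gw_space W)"
    and measure_gw_level_marked_words:
      "measure (gw_space W) {\<omega>. \<Phi> (gw_level \<omega> m) (marked_words m F \<omega>)}
       = (\<Sum>T\<in>Pow L. measure (gw_space W) {\<omega>. gw_level \<omega> m = T}
           * thin_prob L (measure (gw_space W) (UNIV - F)) (\<Phi> T))"
proof -
  interpret P: prob_space "gw_space W" by (rule prob_space_gw_space)
  have finL: "finite L"
    unfolding L_def by (rule finite_words_length)
  define B where "B TY = {\<omega>. gw_level \<omega> m = fst TY \<and> marked_words m F \<omega> = snd TY}" for TY
  define I where "I = {TY \<in> Pow L \<times> Pow L. \<Phi> (fst TY) (snd TY)}"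
  have B: "B TY \<in> sets (gw_space W)" if "TY \<in> I" for TY
    using that sets_gw_level_marked_words_eq[OF F] by (auto simp: B_def I_def L_def)
  have "gw_level \<omega> m \<in> Pow L" "marked_words m F \<omega> \<in> Pow L" for \<omega>
    using length_gw_level by (auto simp: L_def marked_words_def)
  then have U: "{\<omega>. \<Phi> (gw_level \<omega> m) (marked_words m F \<omega>)} = (\<Union>TY\<in>I. B TY)"
    by (auto simp: I_def B_def)
  have finI: "finite I"
    unfolding I_def using finL by auto
  show "{\<omega>. \<Phi> (gw_level \<omega> m) (marked_words m F \<omega>)} \<in> sets (gw_space W)"
    unfolding U using finI B by (intro sets.finite_UN) auto
  have "measure (gw_space W) {\<omega>. \<Phi> (gw_level \<omega> m) (marked_words m F \<omega>)} = (\<Sum>TY\<in>I. P.prob (B TY))"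
    unfolding U using finI B
    by (intro P.finite_measure_finite_Union) (auto simp: disjoint_family_on_def B_def)
  also have "\<dots> = (\<Sum>TY\<in>Pow L \<times> Pow L. if \<Phi> (fst TY) (snd TY) then P.prob (B TY) else 0)"
    unfolding I_def using finL by (simp add: sum.inter_filter)
  also have "\<dots> = (\<Sum>T\<in>Pow L. \<Sum>Y\<in>Pow L. if \<Phi> T Y then P.prob (B (T, Y)) else 0)"
    unfolding sum.cartesian_product by (rule sum.cong) auto
  also have "\<dots> = (\<Sum>T\<in>Pow L. \<Sum>Y\<in>Pow L. if \<Phi> T Y then measure (gw_space W) {\<omega>. gw_level \<omega> m = T}
           * thin_weight L (measure (gw_space W) (UNIV - F)) Y else 0)"
    by (intro sum.cong refl) (simp add: B_def L_def measure_gw_level_marked_words_eq[OF F])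
  also have "\<dots> = (\<Sum>T\<in>Pow L. measure (gw_space W) {\<omega>. gw_level \<omega> m = T}
           * thin_prob L (measure (gw_space W) (UNIV - F)) (\<Phi> T))"
    unfolding thin_prob_def sum_distrib_left by (intro sum.cong refl) simp
  finally show "measure (gw_space W) {\<omega>. \<Phi> (gw_level \<omega> m) (marked_words m F \<omega>)} = \<dots>" .
qed

lemma measure_marked_words_eq_thinning:
  fixes W :: "('a::finite) set pmf"
  assumes F: "F \<in> sets (gw_space W)"
  shows "measure (gw_space W) {\<omega>. \<Phi> (gw_level \<omega> m) (marked_words m F \<omega>)}
    = measure (gw_space W \<Otimes>\<^sub>M measure_pmf (thin_pmf m (measure (gw_space W) (UNIV - F))))
        {(\<omega>, Y). \<Phi> (gw_level \<omega> m) Y}"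
proof -
  let ?L = "{v::'a list. length v = m}"
  let ?s = "measure (gw_space W) (UNIV - F)"
  have s: "0 \<le> ?s" "?s \<le> 1"
    using prob_space.prob_le_1[OF prob_space_gw_space] by auto
  have "measure (gw_space W) {\<omega>. \<Phi> (gw_level \<omega> m) (marked_words m F \<omega>)}
      = (\<Sum>T\<in>Pow ?L. measure (gw_space W) {\<omega>. gw_level \<omega> m = T} *
          measure (thin_pmf m ?s) {Y. \<Phi> T Y})"
    by (simp add: measure_gw_level_marked_words[OF F] measure_thin_pmf[OF s])
  also have "\<dots> = measure (gw_space W \<Otimes>\<^sub>M measure_pmf (thin_pmf m ?s)) {(\<omega>, Y). \<Phi> (gw_level \<omega> m) Y}"
    by (rule measure_gw_level_thinning[OF s, symmetric])
  finally show ?thesis .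
qed

lemma measure_marked_words_not_upclose:
  fixes W :: "('a::finite) set pmf"
  assumes F: "F \<in> sets (gw_space W)"
  shows "measure (gw_space W) {\<omega>. gw_level \<omega> m \<inter> marked_words m F \<omega> \<notin> upclose U}
    = g_fun W m U (measure (gw_space W) (UNIV - F))"
  unfolding g_fun_def by (rule measure_marked_words_eq_thinning[OF F])

section \<open>Subtree events\<close>

text \<open>\<open>\<omega> \<in> subtree_upto U k n\<close> iff the \<open>k\<close>-compressed tree has a \<open>U\<close>-subtree of height \<open>n\<close>.\<close>

fun subtree_upto :: "'a list set set \<Rightarrow> nat \<Rightarrow> nat \<Rightarrow> ('a list \<Rightarrow> 'a set) set" where
  "subtree_upto U k 0 = UNIV"
| "subtree_upto U k (Suc n) = {\<omega>. gw_level \<omega> k \<inter> marked_words k (subtree_upto U k n) \<omega> \<in> upclose U}"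

lemma sets_subtree_upto: "subtree_upto U k n \<in> sets (gw_space (W :: ('a::finite) set pmf))"
proof (induction n)
  case (Suc n)
  show ?case
    using sets_gw_level_marked_words[OF Suc, of "\<lambda>T Y. T \<inter> Y \<in> upclose U" k] by simp
qed (metis sets.top space_gw_space subtree_upto.simps(1))

lemma subtree_upto_Suc_subset: "subtree_upto U k (Suc n) \<subseteq> subtree_upto U k n"
proof (induction n)
  case (Suc n)
  show ?case
  proof
    fix \<omega> assume "\<omega> \<in> subtree_upto U k (Suc (Suc n))"
    then show "\<omega> \<in> subtree_upto U k (Suc n)"
      using marked_words_mono[OF Suc, of k \<omega>] by (auto elim: upclose_mono)
  qed
qed simp

lemma decseq_subtree_upto: "decseq (subtree_upto U k)"
  by (intro decseq_SucI subtree_upto_Suc_subset)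

lemma measure_not_subtree_upto_Suc:
  fixes W :: "('a::finite) set pmf"
  shows "measure (gw_space W) (UNIV - subtree_upto U k (Suc n))
    = g_fun W k U (measure (gw_space W) (UNIV - subtree_upto U k n))"
proof -
  have "UNIV - subtree_upto U k (Suc n)
      = {\<omega>. gw_level \<omega> k \<inter> marked_words k (subtree_upto U k n) \<omega> \<notin> upclose U}"
    by auto
  then show ?thesis
    by (simp add: measure_marked_words_not_upclose sets_subtree_upto)
qed

lemma gw_level_nonempty_if_subtree_upto:
  assumes "{} \<notin> U" "\<omega> \<in> subtree_upto U k n"
  shows "gw_level \<omega> (k * n) \<noteq> {}"
  using assms(2)
proof (induction n arbitrary: \<omega>)
  case (Suc n)
  then obtain X where "X \<in> U" "X \<subseteq> gw_level \<omega> k \<inter> marked_words k (subtree_upto U k n) \<omega>"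
    by (auto simp: upclose_def)
  moreover obtain v where "v \<in> X"
    using \<open>X \<in> U\<close> assms(1) by (metis ex_in_conv)
  ultimately have v: "v \<in> gw_level \<omega> k" "gw_shift v \<omega> \<in> subtree_upto U k n"
    by (auto simp: marked_words_def)
  then obtain w where "w \<in> gw_level (gw_shift v \<omega>) (k * n)"
    using Suc.IH by blast
  then show ?case
    using append_in_gw_level[OF v(1)] by fastforce
qed simp

definition subtree_inf :: "'a list set set \<Rightarrow> nat \<Rightarrow> ('a list \<Rightarrow> 'a set) set" where
  "subtree_inf U k = (\<Inter>n. subtree_upto U k n)"

lemma sets_subtree_inf: "subtree_inf U k \<in> sets (gw_space (W :: ('a::finite) set pmf))"
  unfolding subtree_inf_def using sets_subtree_upto by (intro sets.countable_INT') auto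

lemma subtree_inf_children:
  fixes \<omega> :: "('a::finite) list \<Rightarrow> 'a set"
  assumes "\<omega> \<in> subtree_inf U k"
  shows "gw_level \<omega> k \<inter> marked_words k (subtree_inf U k) \<omega> \<in> upclose U"
proof -
  let ?L = "{v::'a list. length v = k}"
  have "\<exists>n. gw_shift v \<omega> \<in> subtree_upto U k n \<longrightarrow> gw_shift v \<omega> \<in> subtree_inf U k" for v
    unfolding subtree_inf_def by blast
  then obtain N
    where N: "\<And>v. gw_shift v \<omega> \<in> subtree_upto U k (N v) \<Longrightarrow> gw_shift v \<omega> \<in> subtree_inf U k"
    by metis
  \<comment> \<open>Generation \<open>k\<close> has finitely many words, so a single height \<open>n\<close> serves all of them.\<close>
  define n where "n = Max (N ` ?L)"
  have "N v \<le> n" if "v \<in> ?L" for v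
    unfolding n_def using finite_words_length that by (intro Max_ge) auto
  then have "marked_words k (subtree_upto U k n) \<omega> \<subseteq> marked_words k (subtree_inf U k) \<omega>"
    using N decseq_subtree_upto[of U k] by (fastforce simp: marked_words_def decseq_def)
  moreover have "gw_level \<omega> k \<inter> marked_words k (subtree_upto U k n) \<omega> \<in> upclose U"
    using assms subtree_upto.simps(2)[of U k n] unfolding subtree_inf_def by blast
  ultimately show ?thesis
    by (blast intro: upclose_mono)
qed

text \<open>Choosing at every vertex of \<open>subtree_inf\<close> a set of children in \<open>U\<close> that again lie in
  \<open>subtree_inf\<close>, the lineages of this choice form the required subtree.\<close>

lemma has_subtree_if_subtree_inf:
  fixes \<omega> :: "('a::finite) list \<Rightarrow> 'a set"
  assumes H: "\<omega> \<in> subtree_inf U k"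
  shows "has_subtree U (compressed_tree k \<omega>)"
proof -
  define good where "good \<eta> X \<longleftrightarrow> X \<in> U \<and> X \<subseteq> gw_level \<eta> k \<inter> marked_words k (subtree_inf U k) \<eta>"
    for \<eta> X
  have choice: "good \<eta> (SOME X. good \<eta> X)" if "\<eta> \<in> subtree_inf U k" for \<eta>
  proof (rule someI_ex)
    show "\<exists>X. good \<eta> X"
      using subtree_inf_children[OF that] by (auto simp: upclose_def good_def)
  qed
  define f where "f ws = (SOME X. good (gw_shift (concat ws) \<omega>) X)" for ws
  define S where "S = {ws. lineage f ws}"
  have inv: "ws \<in> compressed_tree k \<omega> \<and> gw_shift (concat ws) \<omega> \<in> subtree_inf U k" if "ws \<in> S" for ws
    using that
  proof (induction ws rule: rev_induct)
    case (snoc v ws)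
    then have ws: "ws \<in> compressed_tree k \<omega>" "gw_shift (concat ws) \<omega> \<in> subtree_inf U k"
      and "v \<in> f ws"
      by (auto simp: S_def)
    then have "v \<in> gw_level (gw_shift (concat ws) \<omega>) k"
      "gw_shift v (gw_shift (concat ws) \<omega>) \<in> subtree_inf U k"
      using choice[OF ws(2)] by (auto simp: f_def good_def marked_words_def)
    moreover have "[v] \<in> compressed_tree k (gw_shift (concat ws) \<omega>)"
      using calculation(1) length_gw_level[OF calculation(1)] by (simp add: compressed_tree_def)
    ultimately show ?case
      using compressed_tree_append[OF ws(1)] by (simp add: gw_shift_append)
  qed (simp add: H compressed_tree_def)
  have "is_tree S"
    unfolding is_tree_def S_def by (simp add: lineage_append)
  moreover have "children S a \<in> U" if "a \<in> S" for a
  proof -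
    have "children S a = f a"
      using that by (simp add: children_def S_def)
    then show ?thesis
      using choice inv[OF that] by (simp add: f_def good_def)
  qed
  ultimately show ?thesis
    unfolding has_subtree_def using inv by blast
qed

definition subtree_below :: "'a list set set \<Rightarrow> nat \<Rightarrow> ('a list \<Rightarrow> 'a set) set" where
  "subtree_below U k =
    {\<omega>. \<exists>n. gw_level \<omega> (k * n) \<inter> marked_words (k * n) (subtree_inf U k) \<omega> \<noteq> {}}"

lemma sets_subtree_below: "subtree_below U k \<in> sets (gw_space (W :: ('a::finite) set pmf))"
proof -
  have "subtree_below U k
      = (\<Union>n. {\<omega>. gw_level \<omega> (k * n) \<inter> marked_words (k * n) (subtree_inf U k) \<omega> \<noteq> {}})"
    unfolding subtree_below_def by auto
  also have "\<dots> \<in> sets (gw_space W)"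
    using sets_gw_level_marked_words[where \<Phi> = "\<lambda>T Y. T \<inter> Y \<noteq> {}", OF sets_subtree_inf]
    by (intro sets.countable_UN') auto
  finally show ?thesis .
qed

lemma subtree_inf_subset_below: "subtree_inf U k \<subseteq> subtree_below U k"
proof
  fix \<omega> assume "\<omega> \<in> subtree_inf U k"
  then have "[] \<in> gw_level \<omega> (k * 0) \<inter> marked_words (k * 0) (subtree_inf U k) \<omega>"
    by (simp add: marked_words_def)
  then show "\<omega> \<in> subtree_below U k"
    unfolding subtree_below_def by blast
qed

lemma subtree_below_not_extinct:
  assumes "{} \<notin> U" "0 < k" "\<omega> \<in> subtree_below U k"
  shows "\<not> extinct \<omega>"
proof
  assume "extinct \<omega>"
  then obtain n0 where n0: "gw_level \<omega> n0 = {}"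
    by (auto simp: extinct_def)
  obtain n v where v: "v \<in> gw_level \<omega> (k * n)" "gw_shift v \<omega> \<in> subtree_inf U k"
    using assms(3) by (auto simp: subtree_below_def marked_words_def)
  then have "gw_level (gw_shift v \<omega>) (k * n0) \<noteq> {}"
    using gw_level_nonempty_if_subtree_upto[OF assms(1)] by (auto simp: subtree_inf_def)
  then have "gw_level \<omega> (k * n + k * n0) \<noteq> {}"
    using append_in_gw_level[OF v(1)] by blast
  moreover have "n0 \<le> k * n + k * n0"
    using assms(2) by (simp add: trans_le_add2)
  ultimately show False
    using gw_level_empty_mono[OF n0] by blast
qed

lemma gw_level_Int_marked_words_empty:
  assumes "\<omega> \<notin> subtree_below U k"
  shows "gw_level \<omega> (k * n) \<inter> marked_words (k * n) (subtree_below U k) \<omega> = {}"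
proof (rule ccontr)
  assume "gw_level \<omega> (k * n) \<inter> marked_words (k * n) (subtree_below U k) \<omega> \<noteq> {}"
  then obtain v n' u where v: "v \<in> gw_level \<omega> (k * n)"
    and u: "u \<in> gw_level (gw_shift v \<omega>) (k * n')" "gw_shift u (gw_shift v \<omega>) \<in> subtree_inf U k"
    by (auto simp: subtree_below_def marked_words_def)
  then have "v @ u \<in> gw_level \<omega> (k * (n + n'))"
    using append_in_gw_level[OF v u(1)] by (simp add: algebra_simps)
  moreover have "gw_shift (v @ u) \<omega> \<in> subtree_inf U k"
    using u(2) by (simp add: gw_shift_append)
  ultimately have "\<omega> \<in> subtree_below U k"
    unfolding subtree_below_def marked_words_def using length_gw_level by blast
  then show False
    using assms by simp
qed

lemma measure_not_subtree_below_le_g_fun: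
  fixes W :: "('a::finite) set pmf"
  assumes "{} \<notin> V"
  shows "measure (gw_space W) (UNIV - subtree_below U k)
    \<le> g_fun W (k * n) V (measure (gw_space W) (UNIV - subtree_below U k))"
proof -
  interpret P: prob_space "gw_space W" by (rule prob_space_gw_space)
  have "UNIV - subtree_below U k
      \<subseteq> {\<omega>. gw_level \<omega> (k * n) \<inter> marked_words (k * n) (subtree_below U k) \<omega> \<notin> upclose V}"
  proof
    fix \<omega> assume "\<omega> \<in> UNIV - subtree_below U k"
    then have "gw_level \<omega> (k * n) \<inter> marked_words (k * n) (subtree_below U k) \<omega> = {}"
      by (simp add: gw_level_Int_marked_words_empty)
    then show "\<omega> \<in> {\<omega>. gw_level \<omega> (k * n) \<inter> marked_words (k * n) (subtree_below U k) \<omega> \<notin> upclose V}"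
      using assms by (auto simp: upclose_def) (metis Int_greatest subset_empty)
  qed
  then have "measure (gw_space W) (UNIV - subtree_below U k)
      \<le> measure (gw_space W)
          {\<omega>. gw_level \<omega> (k * n) \<inter> marked_words (k * n) (subtree_below U k) \<omega> \<notin> upclose V}"
    by (intro P.finite_measure_mono sets_gw_level_marked_words sets_subtree_below)
  then show ?thesis
    by (simp add: measure_marked_words_not_upclose sets_subtree_below)
qed

lemma infinite_vertices_with_subtree:
  fixes \<omega> :: "('a::finite) list \<Rightarrow> 'a set"
  assumes "{} \<notin> U" "\<omega> \<in> subtree_below U k"
  shows "infinite {v \<in> compressed_tree k \<omega>. has_subtree U (desc_tree (compressed_tree k \<omega>) v)}"
proof -
  obtain n u where u: "u \<in> gw_level \<omega> (k * n)" "gw_shift u \<omega> \<in> subtree_inf U k"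
    using assms(2) by (auto simp: subtree_below_def marked_words_def)
  obtain ws where ws: "ws \<in> compressed_tree k \<omega>" "concat ws = u"
    using compressed_tree_of_gw_level[OF u(1)] by blast
  obtain S where S: "is_tree S" "S \<subseteq> compressed_tree k (gw_shift u \<omega>)" "\<forall>a\<in>S. children S a \<in> U"
    using has_subtree_if_subtree_inf[OF u(2)] by (auto simp: has_subtree_def)
  have "infinite S"
    using S assms(1) by (intro infinite_tree_without_leaves) auto
  then have "infinite ((@) ws ` S)"
    by (auto dest: finite_imageD simp: inj_on_def)
  moreover have "(@) ws ` S
      \<subseteq> {v \<in> compressed_tree k \<omega>. has_subtree U (desc_tree (compressed_tree k \<omega>) v)}"
  proof safe
    fix vs assume "vs \<in> S"
    then show "ws @ vs \<in> compressed_tree k \<omega>"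
      using S(2) compressed_tree_append[OF ws(1)] ws(2) by blast
    have "is_tree (desc_tree S vs)"
      using S(1) \<open>vs \<in> S\<close> unfolding is_tree_def desc_tree_def by (simp flip: append_assoc)
    moreover have "desc_tree S vs \<subseteq> desc_tree (compressed_tree k \<omega>) (ws @ vs)"
      using S(2) compressed_tree_append[OF ws(1)] ws(2) by (auto simp: desc_tree_def)
    moreover have "\<forall>a\<in>desc_tree S vs. children (desc_tree S vs) a \<in> U"
      using S(3) by (auto simp: desc_tree_def children_def)
    ultimately show "has_subtree U (desc_tree (compressed_tree k \<omega>) (ws @ vs))"
      unfolding has_subtree_def by blast
  qed
  ultimately show ?thesis
    using finite_subset by blast
qed

section \<open>The fixed-point estimates\<close>

lemma measure_subtree_inf_ge:
  fixes W :: "('a::finite) set pmf"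
  assumes s: "0 \<le> s" "s \<le> 1" and g: "g_fun W k U s \<le> s"
  shows "1 - s \<le> measure (gw_space W) (subtree_inf U k)"
proof -
  interpret P: prob_space "gw_space W" by (rule prob_space_gw_space)
  have le: "measure (gw_space W) (UNIV - subtree_upto U k n) \<le> s" for n
  proof (induction n)
    case (Suc n)
    have "measure (gw_space W) (UNIV - subtree_upto U k (Suc n))
        = g_fun W k U (measure (gw_space W) (UNIV - subtree_upto U k n))"
      by (rule measure_not_subtree_upto_Suc)
    also have "\<dots> \<le> g_fun W k U s"
      using Suc s by (intro g_fun_mono) auto
    finally show ?case
      using g by linarith
  qed (use s in simp)
  have "1 - s \<le> measure (gw_space W) (subtree_upto U k n)" for n
    using le[of n] P.prob_compl[OF sets_subtree_upto] by simp
  moreover have "(\<lambda>n. measure (gw_space W) (subtree_upto U k n))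
      \<longlonglongrightarrow> measure (gw_space W) (subtree_inf U k)"
    unfolding subtree_inf_def using sets_subtree_upto decseq_subtree_upto
    by (intro P.finite_Lim_measure_decseq) auto
  ultimately show ?thesis
    by (intro LIMSEQ_le_const) auto
qed

lemma measure_not_subtree_below_le:
  fixes W :: "('a::finite) set pmf" and \<A> :: "nat \<Rightarrow> 'a list set set"
  assumes ne: "\<And>j. {} \<notin> \<A> j" and k: "0 < k"
    and q: "0 \<le> q" and lim: "\<And>s. 0 < s \<Longrightarrow> s < 1 \<Longrightarrow> (\<lambda>j. g_fun W j (\<A> j) s) \<longlonglongrightarrow> q"
    and lt1: "measure (gw_space W) (UNIV - subtree_below U k) < 1"
  shows "measure (gw_space W) (UNIV - subtree_below U k) \<le> q"
proof (cases "measure (gw_space W) (UNIV - subtree_below U k) = 0")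
  case True
  then show ?thesis
    using q by simp
next
  case False
  let ?y = "measure (gw_space W) (UNIV - subtree_below U k)"
  have "strict_mono (\<lambda>n. k * n)"
    using k by (intro strict_monoI) simp
  then have "(\<lambda>n. g_fun W (k * n) (\<A> (k * n)) ?y) \<longlonglongrightarrow> q"
    using LIMSEQ_subseq_LIMSEQ[OF lim[OF _ lt1]] False by (simp add: o_def less_le)
  moreover have "?y \<le> g_fun W (k * n) (\<A> (k * n)) ?y" for n
    by (rule measure_not_subtree_below_le_g_fun[OF ne])
  ultimately show ?thesis
    by (intro LIMSEQ_le_const) auto
qed

lemma eventually_measure_not_subtree_below_le:
  fixes W :: "('a::finite) set pmf" and \<A> :: "nat \<Rightarrow> 'a list set set"
  assumes ne: "\<And>j. {} \<notin> \<A> j"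
    and q: "0 \<le> q" and lim: "\<And>s. 0 < s \<Longrightarrow> s < 1 \<Longrightarrow> (\<lambda>j. g_fun W j (\<A> j) s) \<longlonglongrightarrow> q"
  shows "\<exists>K. \<forall>k>K. measure (gw_space W) (UNIV - subtree_below (\<A> k) k) \<le> q"
proof (cases "q < 1")
  case True
  interpret P: prob_space "gw_space W" by (rule prob_space_gw_space)
  define s where "s = (1 + q) / 2"
  have s: "0 < s" "s < 1" "q < s"
    using True q by (auto simp: s_def)
  obtain K where g: "\<And>k. K \<le> k \<Longrightarrow> g_fun W k (\<A> k) s < s"
    using order_tendstoD(2)[OF lim[OF s(1,2)] s(3)] by (auto simp: eventually_sequentially)
  have "measure (gw_space W) (UNIV - subtree_below (\<A> k) k) < 1" if "K < k" for k
  proof -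
    have "1 - s \<le> measure (gw_space W) (subtree_inf (\<A> k) k)"
      using that s less_imp_le[OF g[of k]] by (intro measure_subtree_inf_ge) auto
    also have "\<dots> \<le> measure (gw_space W) (subtree_below (\<A> k) k)"
      by (intro P.finite_measure_mono subtree_inf_subset_below sets_subtree_below)
    finally show ?thesis
      using P.prob_compl[OF sets_subtree_below, of "\<A> k" k] s by simp
  qed
  then show ?thesis
    using ne q lim by (intro exI[of _ K] allI impI measure_not_subtree_below_le[where \<A> = \<A>]) auto
next
  case False
  then show ?thesis
    using prob_space.prob_le_1[OF prob_space_gw_space] by (meson not_less order_trans)
qed

lemma (in finite_measure) AE_mem_imp_mem_if_measure_le:
  assumes "A \<in> sets M" "B \<in> sets M" "A \<subseteq> B" "measure M B \<le> measure M A"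
  shows "AE x in M. x \<in> B \<longrightarrow> x \<in> A"
proof (rule AE_I')
  have "measure M (B - A) = 0"
    using finite_measure_Diff[OF assms(2,1,3)] assms(4) measure_nonneg[of M "B - A"] by linarith
  then show "B - A \<in> null_sets M"
    using assms(1,2) by (simp add: emeasure_eq_measure null_setsI)
qed auto

theorem lemma4p4:
  fixes W :: "('a::finite) set pmf"
    and \<A> :: "nat \<Rightarrow> 'a list set set"
  assumes pos: "\<And>i. measure_pmf.prob W {X. i \<in> X} > 0"
    and supercrit: "measure_pmf.expectation W (\<lambda>X. real (card X)) > 1"
    and A_ne: "\<And>k. \<A> k \<noteq> {}"
    and A_sets: "\<And>k X. X \<in> \<A> k \<Longrightarrow> X \<noteq> {} \<and> X \<subseteq> {w. length w = k}"
    and g_lim: "\<And>s. 0 < s \<Longrightarrow> s < 1 \<Longrightarrow>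
       (\<lambda>k. g_fun W k (\<A> k) s) \<longlonglongrightarrow> measure (gw_space W) {\<omega>. extinct \<omega>}"
  shows "\<exists>K::nat. \<forall>k>K. AE \<omega> in gw_space W. \<not> extinct \<omega> \<longrightarrow>
           infinite {v \<in> compressed_tree k \<omega>.
                       has_subtree (\<A> k) (desc_tree (compressed_tree k \<omega>) v)}"
proof -
  interpret P: prob_space "gw_space W" by (rule prob_space_gw_space)
  let ?X = "{\<omega>. extinct \<omega>}" and ?B = "\<lambda>k. UNIV - subtree_below (\<A> k) k"
  have ne: "{} \<notin> \<A> k" for k
    using A_sets by blast
  obtain K where K: "\<And>k. K < k \<Longrightarrow> measure (gw_space W) (?B k) \<le> measure (gw_space W) ?X"
    using eventually_measure_not_subtree_below_le[OF ne measure_nonneg g_lim] by blast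
  have X: "?X \<in> sets (gw_space W)"
    unfolding extinct_def Collect_ex_eq using sets_gw_level by (intro sets.countable_UN') auto
  show ?thesis
  proof (intro exI[of _ K] allI impI)
    fix k assume "K < k"
    then have "AE \<omega> in gw_space W. \<omega> \<in> ?B k \<longrightarrow> \<omega> \<in> ?X"
      using K X subtree_below_not_extinct[OF ne, of k]
      by (intro P.AE_mem_imp_mem_if_measure_le sets_gw_space_Compl sets_subtree_below) auto
    then show "AE \<omega> in gw_space W. \<not> extinct \<omega> \<longrightarrow>
        infinite {v \<in> compressed_tree k \<omega>. has_subtree (\<A> k) (desc_tree (compressed_tree k \<omega>) v)}"
      by eventually_elim (use infinite_vertices_with_subtree[OF ne] in blast)
  qed
qed

end
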